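(* In the Mandelbrot–Shepp model with any parameter $\alpha>0$, $$\mathbb{P}_\alpha(\mathcal{V}\neq\emptyset)=\mathbb{P}_\alpha\Big(\bigcap_{n=1}^\infty\big\{\mathcal{V}(\omega[\tfrac1n])\neq\emptyset\big\}\Big).$$
   Context: Mandelbrot–Shepp model: $\mathbb{S}^1=\mathbb{R}/\mathbb{Z}$ represented by $[0,1)$. Under $\mathbb{P}_\alpha$, $\omega=\sum_i\delta_{(x_i,y_i)}$ is a Poisson point process on $\mathbb{S}^1\times(0,\infty)$ with intensity $\alpha\,dx\otimes\frac{dy}{y^2}$. For $(x,y)$ let $\Pi(x,y)=[0,1)$ if $y>1$, $(x,x+y)$ if $y\le1$ and $x+y\le1$, and $(x,1)\cup[0,x+y-1)$ if $y\le1$ and $x+y>1$. For a configuration $\omega$, $\mathcal{C}(\omega)=\bigcup_i\Pi(x_i,y_i)$ and $\mathcal{V}(\omega)=[0,1)\setminus\mathcal{C}(\omega)$; $\mathcal{V}=\mathcal{V}(\omega)$. For $z>0$, the truncated configuration is $\omega[z]=\sum_i\delta_{(x_i,y_i)}\mathbf{1}\{y_i>z\}$. *)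

theory Defs
  imports "HOL-Probability.Probability"
begin

text \<open>Configurations are (locally finite away from y = 0) sets of points
  (x, y) in [0,1) x (0,oo). The circle S^1 = R/Z is represented by [0,1).\<close>

definition MS_dom :: "(real \<times> real) set" where
  "MS_dom = {0..<1} \<times> {0<..}"

definition MS_intensity :: "real \<Rightarrow> (real \<times> real) measure" where
  "MS_intensity \<alpha> =
     density lborel (\<lambda>p. ennreal (\<alpha> * indicator MS_dom p / (snd p)\<^sup>2))"

definition pcount :: "(real \<times> real) set \<Rightarrow> (real \<times> real) set \<Rightarrow> enat" where
  "pcount A \<omega> = (if finite (\<omega> \<inter> A) then enat (card (\<omega> \<inter> A)) else \<infinity>)"

definition MS_PPP :: "real \<Rightarrow> (real \<times> real) set measure \<Rightarrow> bool" where
  "MS_PPP \<alpha> M \<longleftrightarrow>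
     prob_space M \<and>
     (\<forall>\<omega>\<in>space M. \<omega> \<subseteq> MS_dom) \<and>
     (\<forall>A\<in>sets borel. pcount A \<in> measurable M (count_space UNIV)) \<and>
     (\<forall>A\<in>sets borel. A \<subseteq> MS_dom \<longrightarrow> emeasure (MS_intensity \<alpha>) A < \<infinity> \<longrightarrow>
        (\<forall>k::nat. measure M {\<omega>\<in>space M. pcount A \<omega> = enat k} =
           (measure (MS_intensity \<alpha>) A) ^ k / fact k * exp (- measure (MS_intensity \<alpha>) A))) \<and>
     (\<forall>(A :: nat \<Rightarrow> (real \<times> real) set) n.
        (\<forall>i<n. A i \<in> sets borel \<and> A i \<subseteq> MS_dom \<and> emeasure (MS_intensity \<alpha>) (A i) < \<infinity>) \<longrightarrow>
        disjoint_family_on A {..<n} \<longrightarrow>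
        prob_space.indep_vars M (\<lambda>_. count_space UNIV) (\<lambda>i \<omega>. pcount (A i) \<omega>) {..<n})"

definition Pi_arc :: "real \<Rightarrow> real \<Rightarrow> real set" where
  "Pi_arc x y =
     (if y > 1 then {0..<1}
      else if x + y \<le> 1 then {x<..<x + y}
      else {x<..<1} \<union> {0..<x + y - 1})"

definition covered :: "(real \<times> real) set \<Rightarrow> real set" where
  "covered \<omega> = (\<Union>(x, y)\<in>\<omega>. Pi_arc x y)"

definition uncovered :: "(real \<times> real) set \<Rightarrow> real set" where
  "uncovered \<omega> = {0..<1} - covered \<omega>"

definition truncate :: "(real \<times> real) set \<Rightarrow> real \<Rightarrow> (real \<times> real) set" where
  "truncate \<omega> z = {p \<in> \<omega>. snd p > z}"

end

theory Submission
  imports Defs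
begin

(* The two events coincide for every configuration; the point process is only needed for
   measurability.  Lifted to the real line, the relation "s lies in the arc of (x, y)" is an
   open condition on ((x, y), s).  By compactness of [0, 1], a configuration covering the
   circle therefore contains finitely many points, each with an open neighbourhood U such that
   any configuration meeting every U still covers.  Those finitely many points lie above some
   height 1/n, so already the truncation at 1/n covers.  Choosing the neighbourhoods from a
   countable basis writes the covering event as a countable union of finite intersections of
   the events "omega meets U", which are measurable because the counts are. *)

definition arc_region :: "((real \<times> real) \<times> real) set" where
  "arc_region = {(q, s). 1 < snd q \<or> (\<exists>k::int. fst q < s + k \<and> s + k < fst q + snd q)}"

lemma open_arc_region: "open arc_region"
proof -
  have "arc_region = {p. 1 < snd (fst p)} \<union>
      (\<Union>k::int. {p. fst (fst p) < snd p + k} \<inter> {p. snd p + k < fst (fst p) + snd (fst p)})"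
    unfolding arc_region_def by auto
  also have "open \<dots>"
    by (intro open_Un open_UN open_Int ballI open_Collect_less continuous_intros)
  finally show ?thesis .
qed

lemma arc_region_shift: "(q, s + of_int k) \<in> arc_region \<longleftrightarrow> (q, s) \<in> arc_region"
proof -
  have "(\<exists>j::int. a < s + k + j \<and> s + k + j < b) \<longleftrightarrow> (\<exists>j::int. a < s + j \<and> s + j < b)"
    for a b
  proof (standard; elim exE)
    fix j :: int
    assume "a < s + k + j \<and> s + k + j < b"
    then show "\<exists>j::int. a < s + j \<and> s + j < b" by (intro exI[of _ "k + j"]) (simp add: add.assoc)
  next
    fix j :: int
    assume "a < s + j \<and> s + j < b"
    then show "\<exists>j'::int. a < s + k + j' \<and> s + k + j' < b" by (intro exI[of _ "j - k"]) simp
  qed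
  then show ?thesis unfolding arc_region_def by simp
qed

lemma Pi_arc_iff_arc_region:
  assumes "0 \<le> x" "x < 1" "0 \<le> s" "s < 1"
  shows "s \<in> Pi_arc x y \<longleftrightarrow> ((x, y), s) \<in> arc_region"
proof -
  have "(\<exists>k::int. x < s + k \<and> s + k < x + y) \<longleftrightarrow>
          (x < s \<and> s < x + y) \<or> (x < s + 1 \<and> s + 1 < x + y)"
    if "y \<le> 1"
  proof
    assume "\<exists>k::int. x < s + k \<and> s + k < x + y"
    then obtain k :: int where k: "x < s + k" "s + k < x + y" by blast
    then have "real_of_int (-1) < real_of_int k" "real_of_int k < real_of_int 2"
      using assms that by simp_all
    then have "k = 0 \<or> k = 1" unfolding of_int_less_iff by presburger
    with k show "(x < s \<and> s < x + y) \<or> (x < s + 1 \<and> s + 1 < x + y)" by auto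
  next
    assume "(x < s \<and> s < x + y) \<or> (x < s + 1 \<and> s + 1 < x + y)"
    then show "\<exists>k::int. x < s + k \<and> s + k < x + y"
      by (metis add.right_neutral of_int_0 of_int_1)
  qed
  then show ?thesis
    using assms unfolding Pi_arc_def arc_region_def by auto
qed

definition forces_covering :: "(real \<times> real) set set \<Rightarrow> bool" where
  "forces_covering \<U> \<longleftrightarrow>
     (\<forall>\<omega>. \<omega> \<subseteq> MS_dom \<longrightarrow> (\<forall>U\<in>\<U>. U \<inter> \<omega> \<noteq> {}) \<longrightarrow> uncovered \<omega> = {})"

lemma covering_finitely_forced:
  fixes B :: "(real \<times> real) set set"
  assumes "\<omega> \<subseteq> MS_dom" "uncovered \<omega> = {}" "topological_basis B"
  obtains \<U> where "finite \<U>" "\<U> \<subseteq> B" "\<forall>U\<in>\<U>. U \<inter> \<omega> \<noteq> {}" "forces_covering \<U>"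
proof -
  have "\<exists>U C. U \<in> B \<and> U \<inter> \<omega> \<noteq> {} \<and> open C \<and> t \<in> C \<and> U \<times> C \<subseteq> arc_region" for t :: real
  proof -
    have "frac t \<in> covered \<omega>" using assms(2) frac_lt_1[of t] unfolding uncovered_def by auto
    then obtain q where q: "q \<in> \<omega>" "frac t \<in> Pi_arc (fst q) (snd q)"
      unfolding covered_def by fastforce
    moreover have "0 \<le> fst q" "fst q < 1" using q(1) assms(1) by (auto simp: MS_dom_def)
    ultimately have "(q, frac t) \<in> arc_region"
      using Pi_arc_iff_arc_region[of "fst q" "frac t" "snd q"] by (simp add: frac_lt_1)
    then have "(q, t) \<in> arc_region"
      using arc_region_shift[of q "frac t" "\<lfloor>t\<rfloor>"] by (simp add: frac_def)
    then obtain A C where AC: "open A" "open C" "(q, t) \<in> A \<times> C" "A \<times> C \<subseteq> arc_region"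
      by (rule open_prod_elim[OF open_arc_region])
    then obtain U where U: "U \<in> B" "q \<in> U" "U \<subseteq> A"
      using topological_basisE[OF assms(3)] by blast
    have "U \<times> C \<subseteq> arc_region" using U(3) AC(4) by blast
    moreover have "U \<inter> \<omega> \<noteq> {}" using U(2) q(1) by blast
    ultimately show ?thesis using U(1) AC by blast
  qed
  then obtain U where "\<And>t. \<exists>C. U t \<in> B \<and> U t \<inter> \<omega> \<noteq> {} \<and> open C \<and> t \<in> C \<and> U t \<times> C \<subseteq> arc_region"
    by metis
  then obtain C where UC: "\<And>t. U t \<in> B \<and> U t \<inter> \<omega> \<noteq> {} \<and> open (C t) \<and> t \<in> C t \<and> U t \<times> C t \<subseteq> arc_region"
    by metis
  then have "{0..1} \<subseteq> (\<Union>t\<in>UNIV. C t)" by blast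
  then obtain T where T: "finite T" "{0..1} \<subseteq> (\<Union>t\<in>T. C t)"
    using compactE_image[OF compact_Icc, where f=C] UC by metis
  show thesis
  proof
    show "finite (U ` T)" "U ` T \<subseteq> B" "\<forall>V\<in>U ` T. V \<inter> \<omega> \<noteq> {}" using T(1) UC by auto
    show "forces_covering (U ` T)" unfolding forces_covering_def
    proof (intro allI impI)
      fix \<omega>' assume \<omega>': "\<omega>' \<subseteq> MS_dom" "\<forall>V\<in>U ` T. V \<inter> \<omega>' \<noteq> {}"
      have "s \<in> covered \<omega>'" if s: "s \<in> {0..<1}" for s
      proof -
        obtain t where "t \<in> T" "s \<in> C t" using s T(2) by force
        moreover obtain q where q: "q \<in> U t" "q \<in> \<omega>'" using \<omega>'(2) \<open>t \<in> T\<close> by blast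
        ultimately have "(q, s) \<in> arc_region" using UC[of t] by blast
        moreover have "0 \<le> fst q" "fst q < 1" using q(2) \<omega>'(1) by (auto simp: MS_dom_def)
        ultimately have "s \<in> Pi_arc (fst q) (snd q)" using Pi_arc_iff_arc_region s by auto
        with q(2) show ?thesis unfolding covered_def by force
      qed
      then show "uncovered \<omega>' = {}" unfolding uncovered_def by auto
    qed
  qed
qed

lemma uncovered_antimono: "\<omega>' \<subseteq> \<omega> \<Longrightarrow> uncovered \<omega> \<subseteq> uncovered \<omega>'"
  unfolding uncovered_def covered_def by blast

lemma truncate_subset: "truncate \<omega> z \<subseteq> \<omega>"
  unfolding truncate_def by blast

lemma truncation_covering:
  assumes "\<omega> \<subseteq> MS_dom" "uncovered \<omega> = {}"
  obtains n :: nat where "n \<ge> 1" "uncovered (truncate \<omega> (1 / real n)) = {}"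
proof -
  obtain \<U> where \<U>: "finite \<U>" "\<U> \<subseteq> {A. open A}" "\<forall>U\<in>\<U>. U \<inter> \<omega> \<noteq> {}" "forces_covering \<U>"
    by (rule covering_finitely_forced[OF assms topological_basis_trivial])
  then have "\<forall>U\<in>\<U>. \<exists>q. q \<in> U \<inter> \<omega>" by blast
  then have "\<exists>p. \<forall>U\<in>\<U>. p U \<in> U \<inter> \<omega>" by (rule bchoice)
  then obtain p where p: "\<And>U. U \<in> \<U> \<Longrightarrow> p U \<in> U \<inter> \<omega>" by blast
  \<comment> \<open>the extra element 1 keeps the minimum meaningful when \<U> is empty\<close>
  define \<delta> where "\<delta> = Min (insert 1 (snd ` p ` \<U>))"
  have "snd (p U) > 0" if "U \<in> \<U>" for U
    using p[OF that] assms(1) by (auto simp: MS_dom_def)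
  then have "\<delta> > 0" unfolding \<delta>_def using \<U>(1) by simp
  then obtain n :: nat where n: "n > 0" "1 / real n < \<delta>"
    using ex_inverse_of_nat_less by (auto simp: inverse_eq_divide)
  have "U \<inter> truncate \<omega> (1 / real n) \<noteq> {}" if U: "U \<in> \<U>" for U
  proof -
    have "\<delta> \<le> snd (p U)" unfolding \<delta>_def using \<U>(1) U by (intro Min_le) auto
    with n(2) p[OF U] have "p U \<in> U \<inter> truncate \<omega> (1 / real n)"
      unfolding truncate_def by simp
    then show ?thesis by blast
  qed
  moreover have "truncate \<omega> (1 / real n) \<subseteq> MS_dom" using assms(1) truncate_subset by blast
  ultimately have "uncovered (truncate \<omega> (1 / real n)) = {}"
    using \<U>(4) unfolding forces_covering_def by blast
  with n(1) show thesis by (intro that[of n]) auto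
qed

lemma uncovered_truncations_iff:
  assumes "\<omega> \<subseteq> MS_dom"
  shows "(\<forall>n::nat\<ge>1. uncovered (truncate \<omega> (1 / real n)) \<noteq> {}) \<longleftrightarrow> uncovered \<omega> \<noteq> {}"
proof
  assume truncations: "\<forall>n::nat\<ge>1. uncovered (truncate \<omega> (1 / real n)) \<noteq> {}"
  show "uncovered \<omega> \<noteq> {}"
  proof
    assume "uncovered \<omega> = {}"
    then obtain n :: nat where "n \<ge> 1" "uncovered (truncate \<omega> (1 / real n)) = {}"
      by (rule truncation_covering[OF assms])
    with truncations show False by blast
  qed
next
  assume "uncovered \<omega> \<noteq> {}"
  then show "\<forall>n::nat\<ge>1. uncovered (truncate \<omega> (1 / real n)) \<noteq> {}"
    using uncovered_antimono[OF truncate_subset] by blast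
qed

lemma pcount_eq_0_iff: "pcount A \<omega> = 0 \<longleftrightarrow> \<omega> \<inter> A = {}"
  unfolding pcount_def by (auto simp: zero_enat_def)

lemma sets_Collect_hits:
  assumes "pcount A \<in> M \<rightarrow>\<^sub>M count_space UNIV"
  shows "{\<omega>\<in>space M. A \<inter> \<omega> \<noteq> {}} \<in> sets M"
proof -
  have "{\<omega>\<in>space M. A \<inter> \<omega> \<noteq> {}} = pcount A -` (UNIV - {0}) \<inter> space M"
    by (auto simp: pcount_eq_0_iff Int_commute)
  then show ?thesis using measurable_sets[OF assms] by simp
qed

lemma sets_Collect_uncovered_nonempty:
  assumes "\<And>\<omega>. \<omega> \<in> space M \<Longrightarrow> \<omega> \<subseteq> MS_dom"
    and "\<And>A. A \<in> sets borel \<Longrightarrow> pcount A \<in> M \<rightarrow>\<^sub>M count_space UNIV"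
  shows "{\<omega>\<in>space M. uncovered \<omega> \<noteq> {}} \<in> sets M"
proof -
  obtain B :: "(real \<times> real) set set" where B: "countable B" "topological_basis B"
    using ex_countable_basis by blast
  define \<F> where "\<F> = {\<U>. finite \<U> \<and> \<U> \<subseteq> B \<and> forces_covering \<U>}"
  have "{\<omega>\<in>space M. uncovered \<omega> = {}} = (\<Union>\<U>\<in>\<F>. {\<omega>\<in>space M. \<forall>U\<in>\<U>. U \<inter> \<omega> \<noteq> {}})"
  proof (intro equalityI subsetI)
    fix \<omega> assume \<omega>: "\<omega> \<in> {\<omega>\<in>space M. uncovered \<omega> = {}}"
    then have "\<omega> \<subseteq> MS_dom" "uncovered \<omega> = {}" using assms(1) by auto
    then obtain \<U> where "finite \<U>" "\<U> \<subseteq> B" "\<forall>U\<in>\<U>. U \<inter> \<omega> \<noteq> {}" "forces_covering \<U>"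
      using B(2) by (rule covering_finitely_forced)
    with \<omega> show "\<omega> \<in> (\<Union>\<U>\<in>\<F>. {\<omega>\<in>space M. \<forall>U\<in>\<U>. U \<inter> \<omega> \<noteq> {}})"
      unfolding \<F>_def by blast
  next
    fix \<omega> assume "\<omega> \<in> (\<Union>\<U>\<in>\<F>. {\<omega>\<in>space M. \<forall>U\<in>\<U>. U \<inter> \<omega> \<noteq> {}})"
    then show "\<omega> \<in> {\<omega>\<in>space M. uncovered \<omega> = {}}"
      using assms(1) unfolding \<F>_def forces_covering_def by blast
  qed
  also have "\<dots> \<in> sets M"
  proof (rule sets.countable_UN'')
    show "countable \<F>"
      using countable_Collect_finite_subset[OF B(1)] by (rule countable_subset[rotated]) (auto simp: \<F>_def)
    fix \<U> assume "\<U> \<in> \<F>"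
    then have "finite \<U>" "\<And>U. U \<in> \<U> \<Longrightarrow> U \<in> sets borel"
      using topological_basis_open[OF B(2)] unfolding \<F>_def by auto
    then show "{\<omega>\<in>space M. \<forall>U\<in>\<U>. U \<inter> \<omega> \<noteq> {}} \<in> sets M"
      by (intro sets.sets_Collect_finite_All sets_Collect_hits assms(2))
  qed
  finally have "space M - {\<omega>\<in>space M. uncovered \<omega> = {}} \<in> sets M"
    by (rule sets.compl_sets)
  moreover have "space M - {\<omega>\<in>space M. uncovered \<omega> = {}} = {\<omega>\<in>space M. uncovered \<omega> \<noteq> {}}" by blast
  ultimately show ?thesis by simp
qed

theorem mainTheorem14:
  fixes \<alpha> :: real and M :: "(real \<times> real) set measure"
  assumes "\<alpha> > 0" and "MS_PPP \<alpha> M"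
  shows "{\<omega>\<in>space M. uncovered \<omega> \<noteq> {}} \<in> sets M \<and>
         {\<omega>\<in>space M. \<forall>n::nat\<ge>1. uncovered (truncate \<omega> (1 / real n)) \<noteq> {}} \<in> sets M \<and>
         measure M {\<omega>\<in>space M. uncovered \<omega> \<noteq> {}} =
         measure M {\<omega>\<in>space M. \<forall>n::nat\<ge>1. uncovered (truncate \<omega> (1 / real n)) \<noteq> {}}"
proof -
  note PPP = assms(2)[unfolded MS_PPP_def]
  have dom: "\<And>\<omega>. \<omega> \<in> space M \<Longrightarrow> \<omega> \<subseteq> MS_dom"
    using PPP[THEN conjunct2, THEN conjunct1] by blast
  have counts: "\<And>A. A \<in> sets borel \<Longrightarrow> pcount A \<in> M \<rightarrow>\<^sub>M count_space UNIV"
    using PPP[THEN conjunct2, THEN conjunct2, THEN conjunct1] by blast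
  have "{\<omega>\<in>space M. \<forall>n::nat\<ge>1. uncovered (truncate \<omega> (1 / real n)) \<noteq> {}} =
        {\<omega>\<in>space M. uncovered \<omega> \<noteq> {}}"
    using uncovered_truncations_iff[OF dom] by blast
  with sets_Collect_uncovered_nonempty[OF dom counts] show ?thesis by simp
qed

end
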